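(* Assume conditions (G) and (B) hold, let $\alpha\in(0,1)$ satisfy $r_n<\alpha$ and $\alpha+2r_n<1$, let $\beta\in(0,1)$, and let $r_n'=2r_n+\delta_n$. Let $\widehat\pi_{\mathrm{PoLeCe}}$ be any random element of $\Pi$ with $\widehat\pi_{\mathrm{PoLeCe}}\in\arg\max_{\pi\in\Pi}LV_{1-\alpha}(\pi)$, and set $LV_{1-\alpha,\Pi}=\max_{\pi\in\Pi}LV_{1-\alpha}(\pi)$. Then: (i) with probability at least $1-\alpha-r_n'$, $$V_{\max}\ge V(\widehat\pi_{\mathrm{PoLeCe}})\ge LV_{1-\alpha,\Pi};$$ (ii) with probability at least $1-\alpha-\beta-r_n-r_n'$, $$V_{\max}-V(\widehat\pi_{\mathrm{PoLeCe}})\le V_{\max}-LV_{1-\alpha,\Pi}\le\frac{\underline\sigma_{\Pi_0}}{\sqrt n}\bigl\{q_{1-\beta,\Pi_0}+q_{1-\alpha+r_n,\Pi}\bigr\}.$$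
   Context: Setting. $\Pi$ is a finite nonempty set of policies, $n$ a positive integer. $V:\Pi\to\mathbb R$ is a deterministic welfare function; on a probability space (the data), $(\widehat V(\pi))_{\pi\in\Pi}$ are real random variables and $(\widehat s(\pi))_{\pi\in\Pi}$ strictly positive random variables. $\widehat Z_\pi=(\widehat V(\pi)-V(\pi))/\widehat s(\pi)$. $(Z_\pi)_{\pi\in\Pi}$ is a centered Gaussian vector with $\mathrm{Var}(Z_\pi)=1$ for all $\pi$. $\mathcal A$ is the collection of rectangles in $\mathbb R^\Pi$ (products of possibly unbounded intervals). Condition (G): there is $r_n\ge0$ with $|\Pr((\widehat Z_\pi)_\pi\in A)-\Pr((Z_\pi)_\pi\in A)|\le r_n$ for all $A\in\mathcal A$. Bootstrap: $\widehat C$ is a data-dependent positive semidefinite $|\Pi|\times|\Pi|$ matrix; conditionally on the data, $(\widehat Z^*_\pi)_{\pi\in\Pi}\sim N(0,\widehat C)$, and $\Pr^*$ denotes this conditional probability. Condition (B): there is $\delta_n\in[0,1]$ such that, with probability at least $1-\delta_n$ over the data, $|\Pr^*((\widehat Z^*_\pi)_\pi\in A)-\Pr((Z_\pi)_\pi\in A)|\le r_n$ for all $A\in\mathcal A$. Quantiles: for $\tau\in(0,1)$ the $\tau$-quantile of $X$ under $P$ is $\inf\{x:P(X\le x)\ge\tau\}$. For nonempty $K\subseteq\Pi$, $q_{\tau,K}$ is the $\tau$-quantile of $\max_{\pi\in K}Z_\pi$ under $\Pr$, and $\widehat q_{\tau,\Pi}$ is the $\tau$-quantile of $\max_{\pi\in\Pi}\widehat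 Z^*_\pi$ under $\Pr^*$. Further notation: $LV_{1-\alpha}(\pi)=\widehat V(\pi)-\widehat q_{1-\alpha,\Pi}\widehat s(\pi)$; $V_{\max}=\max_{\pi\in\Pi}V(\pi)$; $\Pi_0=\{\pi\in\Pi:V(\pi)=V_{\max}\}$; $\underline\sigma_{\Pi_0}=\sqrt n\min_{\pi\in\Pi_0}\widehat s(\pi)$. *)

theory Defs
  imports "HOL-Probability.Probability"
begin

text \<open>Rectangles in R^Pi: products over Pi of (possibly unbounded, possibly degenerate)
  real intervals; a rectangle is given by a family I of interval sets.\<close>
definition rectangle_family :: "'p set \<Rightarrow> ('p \<Rightarrow> real set) \<Rightarrow> bool" where
  "rectangle_family P I \<longleftrightarrow> (\<forall>p\<in>P. is_interval (I p))"

definition prob_rect :: "'b measure \<Rightarrow> 'p set \<Rightarrow> ('b \<Rightarrow> 'p \<Rightarrow> real) \<Rightarrow> ('p \<Rightarrow> real set) \<Rightarrow> real" where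
  "prob_rect N P X I = measure N {x \<in> space N. \<forall>p\<in>P. X x p \<in> I p}"

definition centered_gaussian_vector ::
  "'b measure \<Rightarrow> 'p set \<Rightarrow> ('b \<Rightarrow> 'p \<Rightarrow> real) \<Rightarrow> ('p \<Rightarrow> 'p \<Rightarrow> real) \<Rightarrow> bool" where
  "centered_gaussian_vector N P X C \<longleftrightarrow>
     prob_space N \<and>
     (\<forall>p\<in>P. (\<lambda>x. X x p) \<in> borel_measurable N) \<and>
     (\<forall>p\<in>P. \<forall>q\<in>P. C p q = C q p) \<and>
     (\<forall>c::'p \<Rightarrow> real.
        let s2 = (\<Sum>p\<in>P. \<Sum>q\<in>P. c p * c q * C p q)
        in 0 \<le> s2 \<and>
           distr N borel (\<lambda>x. \<Sum>p\<in>P. c p * X x p) =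
             (if s2 = 0 then return borel 0
              else density lborel (normal_density 0 (sqrt s2))))"

definition quantile :: "'b measure \<Rightarrow> ('b \<Rightarrow> real) \<Rightarrow> real \<Rightarrow> real" where
  "quantile N X tau = Inf {x::real. tau \<le> measure N {y \<in> space N. X y \<le> x}}"

end

(*
  On the event where the bootstrap approximates the rectangle probabilities of Z within r,
  the bootstrap critical value qhat lies between the (1 - alpha - r)- and (1 - alpha + r)-quantiles
  of max Z. By condition (G), with the stated probabilities all studentised errors Zhat are at most
  the (1 - alpha - r)-quantile, hence at most qhat, which makes every LV(pi) a lower bound for V(pi);
  for part (ii) one also asks Zhat(pi0) >= - q(1 - beta, Pi0) at the optimal policy pi0 with the
  smallest standard error, and this bounds the regret.

  That last event needs that Z and -Z have the same orthant probabilities. A centred Gaussian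
  vector is only given through the laws of its linear combinations, so the symmetry is obtained by
  Gaussian smoothing: the expectation of a product of normal tails Phi((x - Z(pi)) / sigma) is a
  Lebesgue integral of expectations E cos(t . Z), which are even in Z, and letting sigma tend to 0
  recovers the orthant probabilities.
*)

theory Submission
  imports Defs "HOL-Real_Asymp.Real_Asymp"
begin

section \<open>Gaussian smoothing of orthant indicators\<close>

lemma integral_cos_sum_std_normal:
  fixes K :: "'p set" and v :: "'p \<Rightarrow> real"
  assumes K: "finite K"
  shows "(\<integral>T. cos (\<Sum>p\<in>K. T p * v p) \<partial>PiM K (\<lambda>_. std_normal_distribution))
       = (\<Prod>p\<in>K. exp (- (v p)\<^sup>2 / 2))"
proof -
  interpret std_normal: real_distribution std_normal_distribution
    by (rule real_dist_normal_dist)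
  let ?Q = "PiM K (\<lambda>_. std_normal_distribution)"
  interpret product_sigma_finite "\<lambda>_::'p. std_normal_distribution"
    by (simp add: product_sigma_finite_def std_normal.sigma_finite_measure_axioms)
  interpret Q: prob_space ?Q
    by (simp add: std_normal.prob_space_axioms prob_space_PiM)
  have char_factor: "(\<integral>t. iexp (v p * t) \<partial>std_normal_distribution) = exp (- (v p)\<^sup>2 / 2)" for p
    using fun_cong[OF char_std_normal_distribution, of "v p"] by (simp add: char_def)
  have "(\<integral>T. iexp (\<Sum>p\<in>K. T p * v p) \<partial>?Q) = (\<integral>T. (\<Prod>p\<in>K. iexp (v p * T p)) \<partial>?Q)"
    using K by (simp add: exp_sum sum_distrib_left mult_ac)
  also have "\<dots> = (\<Prod>p\<in>K. \<integral>t. iexp (v p * t) \<partial>std_normal_distribution)"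
    by (rule product_integral_prod[OF K]) (auto intro: std_normal.integrable_iexp)
  also have "\<dots> = (\<Prod>p\<in>K. complex_of_real (exp (- (v p)\<^sup>2 / 2)))"
    by (rule prod.cong[OF refl char_factor])
  finally have iexp_integral: "(\<integral>T. iexp (\<Sum>p\<in>K. T p * v p) \<partial>?Q)
      = (\<Prod>p\<in>K. complex_of_real (exp (- (v p)\<^sup>2 / 2)))" .
  have "(\<integral>T. cos (\<Sum>p\<in>K. T p * v p) \<partial>?Q) = (\<integral>T. Re (iexp (\<Sum>p\<in>K. T p * v p)) \<partial>?Q)"
    by (simp add: Re_exp)
  also have "\<dots> = Re (\<integral>T. iexp (\<Sum>p\<in>K. T p * v p) \<partial>?Q)"
    using Q.integrable_iexp[of "\<lambda>T. \<Sum>p\<in>K. T p * v p"] by simp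
  also have "\<dots> = (\<Prod>p\<in>K. exp (- (v p)\<^sup>2 / 2))"
    by (simp only: iexp_integral of_real_prod[symmetric] Re_complex_of_real)
  finally show ?thesis .
qed

lemma (in prob_space) integral_cos_diff_neg:
  fixes f :: "'a \<Rightarrow> real"
  assumes [measurable]: "f \<in> borel_measurable M" and sin_zero: "(\<integral>\<omega>. sin (f \<omega>) \<partial>M) = 0"
  shows "(\<integral>\<omega>. cos (f \<omega> - b) \<partial>M) = (\<integral>\<omega>. cos (- f \<omega> - b) \<partial>M)"
proof -
  have "integrable M (\<lambda>\<omega>. cos (f \<omega>))" "integrable M (\<lambda>\<omega>. sin (f \<omega>))"
    by (auto intro!: integrable_const_bound[where B=1])
  then show ?thesis
    by (simp add: cos_diff cos_add sin_zero)
qed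

lemma (in prob_space) integral_gaussian_kernel_eq_integral_cos:
  fixes K :: "'p set" and Y :: "'a \<Rightarrow> 'p \<Rightarrow> real"
  assumes K: "finite K" and [measurable]: "\<And>p. p \<in> K \<Longrightarrow> (\<lambda>\<omega>. Y \<omega> p) \<in> borel_measurable M"
  shows "(\<integral>\<omega>. (\<Prod>p\<in>K. exp (- ((Y \<omega> p - a p) / \<sigma>)\<^sup>2 / 2)) \<partial>M)
       = (\<integral>T. (\<integral>\<omega>. cos (\<Sum>p\<in>K. T p * ((Y \<omega> p - a p) / \<sigma>)) \<partial>M) \<partial>PiM K (\<lambda>_. std_normal_distribution))"
proof -
  interpret std_normal: real_distribution std_normal_distribution
    by (rule real_dist_normal_dist)
  let ?Q = "PiM K (\<lambda>_. std_normal_distribution)"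
  interpret Q: prob_space ?Q
    by (simp add: std_normal.prob_space_axioms prob_space_PiM)
  interpret MQ: pair_prob_space M ?Q
    by (simp add: pair_prob_space_def pair_sigma_finite_def prob_space_axioms Q.prob_space_axioms
        prob_space_imp_sigma_finite)
  have "integrable (M \<Otimes>\<^sub>M ?Q) (\<lambda>(\<omega>, T). cos (\<Sum>p\<in>K. T p * ((Y \<omega> p - a p) / \<sigma>)))"
    by (rule MQ.integrable_const_bound[where B=1]) auto
  then have "(\<integral>\<omega>. (\<integral>T. cos (\<Sum>p\<in>K. T p * ((Y \<omega> p - a p) / \<sigma>)) \<partial>?Q) \<partial>M)
      = (\<integral>T. (\<integral>\<omega>. cos (\<Sum>p\<in>K. T p * ((Y \<omega> p - a p) / \<sigma>)) \<partial>M) \<partial>?Q)"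
    using MQ.Fubini_integral[of "\<lambda>\<omega> T. cos (\<Sum>p\<in>K. T p * ((Y \<omega> p - a p) / \<sigma>))"] by simp
  then show ?thesis
    by (simp only: integral_cos_sum_std_normal[OF K])
qed

lemma (in prob_space) integral_gaussian_kernel_neg:
  fixes K :: "'p set" and X :: "'a \<Rightarrow> 'p \<Rightarrow> real"
  assumes K: "finite K" and X_meas [measurable]: "\<And>p. p \<in> K \<Longrightarrow> (\<lambda>\<omega>. X \<omega> p) \<in> borel_measurable M"
    and sin_zero: "\<And>t. (\<integral>\<omega>. sin (\<Sum>p\<in>K. t p * X \<omega> p) \<partial>M) = 0"
  shows "(\<integral>\<omega>. (\<Prod>p\<in>K. exp (- ((X \<omega> p - a p) / \<sigma>)\<^sup>2 / 2)) \<partial>M)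
       = (\<integral>\<omega>. (\<Prod>p\<in>K. exp (- ((- X \<omega> p - a p) / \<sigma>)\<^sup>2 / 2)) \<partial>M)"
proof -
  let ?Q = "PiM K (\<lambda>_. std_normal_distribution)"
  have neg_meas: "\<And>p. p \<in> K \<Longrightarrow> (\<lambda>\<omega>. - X \<omega> p) \<in> borel_measurable M"
    by measurable
  have cos_eq: "(\<integral>\<omega>. cos (\<Sum>p\<in>K. T p * ((X \<omega> p - a p) / \<sigma>)) \<partial>M)
      = (\<integral>\<omega>. cos (\<Sum>p\<in>K. T p * ((- X \<omega> p - a p) / \<sigma>)) \<partial>M)" for T
  proof -
    let ?f = "\<lambda>\<omega>. \<Sum>p\<in>K. T p / \<sigma> * X \<omega> p" and ?b = "\<Sum>p\<in>K. T p / \<sigma> * a p"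
    have "(\<Sum>p\<in>K. T p * ((X \<omega> p - a p) / \<sigma>)) = ?f \<omega> - ?b" for \<omega>
      by (simp add: sum_subtractf[symmetric] field_simps diff_divide_distrib)
    moreover have "(\<Sum>p\<in>K. T p * ((- X \<omega> p - a p) / \<sigma>)) = - ?f \<omega> - ?b" for \<omega>
      by (simp add: sum_subtractf[symmetric] sum_negf[symmetric] field_simps diff_divide_distrib)
    moreover have "?f \<in> borel_measurable M"
      by measurable
    moreover have "(\<integral>\<omega>. sin (?f \<omega>) \<partial>M) = 0"
      using sin_zero[of "\<lambda>p. T p / \<sigma>"] by simp
    ultimately show ?thesis
      using integral_cos_diff_neg[of ?f ?b] by simp
  qed
  have "(\<integral>\<omega>. (\<Prod>p\<in>K. exp (- ((X \<omega> p - a p) / \<sigma>)\<^sup>2 / 2)) \<partial>M)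
      = (\<integral>T. (\<integral>\<omega>. cos (\<Sum>p\<in>K. T p * ((X \<omega> p - a p) / \<sigma>)) \<partial>M) \<partial>?Q)"
    by (rule integral_gaussian_kernel_eq_integral_cos[OF K]) (rule X_meas)
  also have "\<dots> = (\<integral>T. (\<integral>\<omega>. cos (\<Sum>p\<in>K. T p * ((- X \<omega> p - a p) / \<sigma>)) \<partial>M) \<partial>?Q)"
    by (simp only: cos_eq)
  also have "\<dots> = (\<integral>\<omega>. (\<Prod>p\<in>K. exp (- ((- X \<omega> p - a p) / \<sigma>)\<^sup>2 / 2)) \<partial>M)"
    by (rule integral_gaussian_kernel_eq_integral_cos[OF K, symmetric]) (rule neg_meas)
  finally show ?thesis .
qed

text \<open>\<open>normal_tail \<sigma> x u\<close> is the probability that \<open>u - \<sigma> G \<le> x\<close> for a standard normal \<open>G\<close>,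
  a Gaussian smoothing of the indicator of \<open>u \<le> x\<close>.\<close>
definition normal_tail :: "real \<Rightarrow> real \<Rightarrow> real \<Rightarrow> real" where
  "normal_tail \<sigma> x u = measure std_normal_distribution {(u - x) / \<sigma> ..}"

lemma normal_tail_nonneg: "0 \<le> normal_tail \<sigma> x u"
  by (simp add: normal_tail_def)

lemma normal_tail_le_1: "normal_tail \<sigma> x u \<le> 1"
proof -
  interpret std_normal: real_distribution std_normal_distribution
    by (rule real_dist_normal_dist)
  show ?thesis
    by (simp add: normal_tail_def)
qed

lemma prod_normal_tail_nonneg: "0 \<le> (\<Prod>p\<in>K. normal_tail \<sigma> x (u p))"
  by (intro prod_nonneg normal_tail_nonneg)

lemma prod_normal_tail_le_1: "(\<Prod>p\<in>K. normal_tail \<sigma> x (u p)) \<le> 1"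
  by (intro prod_le_1 conjI normal_tail_nonneg normal_tail_le_1)

lemma normal_tail_eq_1_minus: "normal_tail \<sigma> x u = 1 - measure std_normal_distribution {..< (u - x) / \<sigma>}"
proof -
  interpret std_normal: real_distribution std_normal_distribution
    by (rule real_dist_normal_dist)
  have "{(u - x) / \<sigma> ..} = space std_normal_distribution - {..< (u - x) / \<sigma>}"
    by auto
  then show ?thesis
    using std_normal.prob_compl[of "{..< (u - x) / \<sigma>}"] by (simp add: normal_tail_def)
qed

lemma borel_measurable_normal_tail [measurable]: "normal_tail \<sigma> x \<in> borel_measurable borel"
proof -
  interpret std_normal: real_distribution std_normal_distribution
    by (rule real_dist_normal_dist)
  have "mono (\<lambda>y. measure std_normal_distribution {..< y})"
    by (auto intro!: monoI std_normal.finite_measure_mono)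
  then have "(\<lambda>y. measure std_normal_distribution {..< y}) \<in> borel_measurable borel"
    by (rule borel_measurable_mono)
  then have "(\<lambda>u. measure std_normal_distribution {..< (u - x) / \<sigma>}) \<in> borel_measurable borel"
    by (rule measurable_compose[rotated]) simp
  then show ?thesis
    by (simp add: normal_tail_eq_1_minus[abs_def])
qed

lemma nn_integral_gaussian_kernel_atMost:
  assumes \<sigma>: "0 < \<sigma>"
  shows "(\<integral>\<^sup>+ a. ennreal (indicator {..x} a * exp (- ((u - a) / \<sigma>)\<^sup>2 / 2)) \<partial>lborel)
       = ennreal (\<sigma> * sqrt (2 * pi) * normal_tail \<sigma> x u)"
proof -
  interpret std_normal: real_distribution std_normal_distribution
    by (rule real_dist_normal_dist)
  let ?f = "\<lambda>a. ennreal (indicator {..x} a * exp (- ((u - a) / \<sigma>)\<^sup>2 / 2))"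
  let ?g = "\<lambda>s. ennreal (std_normal_density s * indicator {(u - x) / \<sigma> ..} s)"
  have "(\<integral>\<^sup>+ a. ?f a \<partial>lborel) = ennreal \<sigma> * (\<integral>\<^sup>+ s. ?f (u + (- \<sigma>) * s) \<partial>lborel)"
    using \<sigma> by (subst nn_integral_real_affine[where c="- \<sigma>" and t=u]) auto
  also have "(\<integral>\<^sup>+ s. ?f (u + (- \<sigma>) * s) \<partial>lborel) = (\<integral>\<^sup>+ s. ennreal (sqrt (2 * pi)) * ?g s \<partial>lborel)"
  proof (rule nn_integral_cong)
    fix s
    have "indicator {..x} (u + (- \<sigma>) * s) = (indicator {(u - x) / \<sigma> ..} s :: real)"
      using \<sigma> by (auto simp: indicator_def field_simps)
    moreover have "(u - (u + - \<sigma> * s)) / \<sigma> = s"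
      using \<sigma> by (simp add: field_simps)
    ultimately show "?f (u + (- \<sigma>) * s) = ennreal (sqrt (2 * pi)) * ?g s"
      by (simp add: std_normal_density_def ennreal_mult'[symmetric] mult_ac)
  qed
  also have "\<dots> = ennreal (sqrt (2 * pi)) * (\<integral>\<^sup>+ s. ?g s \<partial>lborel)"
    by (rule nn_integral_cmult) measurable
  also have "(\<integral>\<^sup>+ s. ?g s \<partial>lborel) = emeasure std_normal_distribution {(u - x) / \<sigma> ..}"
    by (subst emeasure_density) (auto intro!: nn_integral_cong simp: ennreal_mult' indicator_def)
  finally show ?thesis
    using \<sigma> by (simp add: normal_tail_def std_normal.emeasure_eq_measure ennreal_mult' mult_ac)
qed

lemma prod_normal_tail_eq_nn_integral:
  fixes K :: "'p set"
  assumes K: "finite K" and \<sigma>: "0 < \<sigma>"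
  shows "ennreal ((\<sigma> * sqrt (2 * pi)) ^ card K * (\<Prod>p\<in>K. normal_tail \<sigma> x (u p)))
       = (\<integral>\<^sup>+ a. (\<Prod>p\<in>K. ennreal (indicator {..x} (a p) * exp (- ((u p - a p) / \<sigma>)\<^sup>2 / 2)))
            \<partial>PiM K (\<lambda>_. lborel))"
proof -
  interpret L: finite_product_sigma_finite "\<lambda>_. lborel :: real measure" K
    by (simp add: finite_product_sigma_finite_def product_sigma_finite_def
        finite_product_sigma_finite_axioms_def K lborel.sigma_finite_measure_axioms)
  have "ennreal ((\<sigma> * sqrt (2 * pi)) ^ card K * (\<Prod>p\<in>K. normal_tail \<sigma> x (u p)))
      = (\<Prod>p\<in>K. ennreal (\<sigma> * sqrt (2 * pi) * normal_tail \<sigma> x (u p)))"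
    using \<sigma> by (simp add: prod_ennreal normal_tail_nonneg prod.distrib)
  also have "\<dots> = (\<Prod>p\<in>K. \<integral>\<^sup>+ a. ennreal (indicator {..x} a * exp (- ((u p - a) / \<sigma>)\<^sup>2 / 2)) \<partial>lborel)"
    by (rule prod.cong[OF refl nn_integral_gaussian_kernel_atMost[OF \<sigma>, symmetric]])
  also have "\<dots> = (\<integral>\<^sup>+ a. (\<Prod>p\<in>K. ennreal (indicator {..x} (a p) * exp (- ((u p - a p) / \<sigma>)\<^sup>2 / 2)))
            \<partial>PiM K (\<lambda>_. lborel))"
    by (rule L.product_nn_integral_prod[OF K, symmetric]) auto
  finally show ?thesis .
qed

lemma (in prob_space) integral_prod_normal_tail_eq_nn_integral:
  fixes K :: "'p set" and Y :: "'a \<Rightarrow> 'p \<Rightarrow> real"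
  assumes K: "finite K" and [measurable]: "\<And>p. p \<in> K \<Longrightarrow> (\<lambda>\<omega>. Y \<omega> p) \<in> borel_measurable M"
    and \<sigma>: "0 < \<sigma>"
  shows "ennreal ((\<sigma> * sqrt (2 * pi)) ^ card K * (\<integral>\<omega>. (\<Prod>p\<in>K. normal_tail \<sigma> x (Y \<omega> p)) \<partial>M))
       = (\<integral>\<^sup>+ a. ennreal (\<Prod>p\<in>K. indicator {..x} (a p))
            * ennreal (\<integral>\<omega>. (\<Prod>p\<in>K. exp (- ((Y \<omega> p - a p) / \<sigma>)\<^sup>2 / 2)) \<partial>M) \<partial>PiM K (\<lambda>_. lborel))"
proof -
  let ?L = "PiM K (\<lambda>_. lborel :: real measure)"
  let ?c = "(\<sigma> * sqrt (2 * pi)) ^ card K"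
  let ?k = "\<lambda>\<omega> a. (\<Prod>p\<in>K. exp (- ((Y \<omega> p - a p) / \<sigma>)\<^sup>2 / 2))"
  interpret L: finite_product_sigma_finite "\<lambda>_. lborel :: real measure" K
    by (simp add: finite_product_sigma_finite_def product_sigma_finite_def
        finite_product_sigma_finite_axioms_def K lborel.sigma_finite_measure_axioms)
  interpret PL: pair_sigma_finite M ?L
    by (simp add: pair_sigma_finite_def sigma_finite_measure_axioms L.sigma_finite_measure_axioms)
  have bounded: "integrable M f" if "f \<in> borel_measurable M" "\<And>\<omega>. 0 \<le> f \<omega>" "\<And>\<omega>. f \<omega> \<le> B"
    for f :: "'a \<Rightarrow> real" and B
    using that by (intro integrable_const_bound[where B=B]) auto
  have "ennreal (?c * (\<integral>\<omega>. (\<Prod>p\<in>K. normal_tail \<sigma> x (Y \<omega> p)) \<partial>M))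
      = ennreal (\<integral>\<omega>. ?c * (\<Prod>p\<in>K. normal_tail \<sigma> x (Y \<omega> p)) \<partial>M)"
    by simp
  also have "\<dots> = (\<integral>\<^sup>+ \<omega>. ennreal (?c * (\<Prod>p\<in>K. normal_tail \<sigma> x (Y \<omega> p))) \<partial>M)"
  proof (rule nn_integral_eq_integral[symmetric])
    have "0 \<le> ?c"
      using \<sigma> by simp
    with prod_normal_tail_nonneg prod_normal_tail_le_1 have bounds: "0 \<le> ?c * (\<Prod>p\<in>K. normal_tail \<sigma> x (Y \<omega> p))"
      "?c * (\<Prod>p\<in>K. normal_tail \<sigma> x (Y \<omega> p)) \<le> ?c" for \<omega>
      by (metis mult_nonneg_nonneg, metis mult_left_le)
    have "(\<lambda>\<omega>. ?c * (\<Prod>p\<in>K. normal_tail \<sigma> x (Y \<omega> p))) \<in> borel_measurable M"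
      by measurable
    from this bounds show "integrable M (\<lambda>\<omega>. ?c * (\<Prod>p\<in>K. normal_tail \<sigma> x (Y \<omega> p)))"
      by (rule bounded)
    show "AE \<omega> in M. 0 \<le> ?c * (\<Prod>p\<in>K. normal_tail \<sigma> x (Y \<omega> p))"
      using bounds(1) by simp
  qed
  also have "\<dots> = (\<integral>\<^sup>+ \<omega>. (\<integral>\<^sup>+ a. (\<Prod>p\<in>K. ennreal (indicator {..x} (a p) * exp (- ((Y \<omega> p - a p) / \<sigma>)\<^sup>2 / 2))) \<partial>?L) \<partial>M)"
    by (simp add: prod_normal_tail_eq_nn_integral[OF K \<sigma>])
  also have "\<dots> = (\<integral>\<^sup>+ a. (\<integral>\<^sup>+ \<omega>. (\<Prod>p\<in>K. ennreal (indicator {..x} (a p) * exp (- ((Y \<omega> p - a p) / \<sigma>)\<^sup>2 / 2))) \<partial>M) \<partial>?L)"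
    by (rule PL.Fubini'[symmetric]) measurable
  also have "\<dots> = (\<integral>\<^sup>+ a. ennreal (\<Prod>p\<in>K. indicator {..x} (a p)) * ennreal (\<integral>\<omega>. ?k \<omega> a \<partial>M) \<partial>?L)"
  proof (rule nn_integral_cong)
    fix a
    have "(\<Prod>p\<in>K. ennreal (indicator {..x} (a p) * exp (- ((Y \<omega> p - a p) / \<sigma>)\<^sup>2 / 2)))
        = ennreal (\<Prod>p\<in>K. indicator {..x} (a p)) * ennreal (?k \<omega> a)" for \<omega>
      by (simp add: prod_ennreal[symmetric] prod.distrib ennreal_mult' prod_nonneg)
    moreover have "(\<integral>\<^sup>+ \<omega>. ennreal (?k \<omega> a) \<partial>M) = ennreal (\<integral>\<omega>. ?k \<omega> a \<partial>M)"
      by (rule nn_integral_eq_integral) (auto intro!: bounded[of _ 1] prod_nonneg prod_le_1)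
    ultimately show "(\<integral>\<^sup>+ \<omega>. (\<Prod>p\<in>K. ennreal (indicator {..x} (a p) * exp (- ((Y \<omega> p - a p) / \<sigma>)\<^sup>2 / 2))) \<partial>M)
        = ennreal (\<Prod>p\<in>K. indicator {..x} (a p)) * ennreal (\<integral>\<omega>. ?k \<omega> a \<partial>M)"
      by (simp add: nn_integral_cmult)
  qed
  finally show ?thesis .
qed

lemma (in prob_space) integral_prod_normal_tail_neg:
  fixes K :: "'p set" and X :: "'a \<Rightarrow> 'p \<Rightarrow> real"
  assumes K: "finite K" and X_meas [measurable]: "\<And>p. p \<in> K \<Longrightarrow> (\<lambda>\<omega>. X \<omega> p) \<in> borel_measurable M"
    and sin_zero: "\<And>t. (\<integral>\<omega>. sin (\<Sum>p\<in>K. t p * X \<omega> p) \<partial>M) = 0"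
    and \<sigma>: "0 < \<sigma>"
  shows "(\<integral>\<omega>. (\<Prod>p\<in>K. normal_tail \<sigma> x (X \<omega> p)) \<partial>M)
       = (\<integral>\<omega>. (\<Prod>p\<in>K. normal_tail \<sigma> x (- X \<omega> p)) \<partial>M)"
proof -
  let ?c = "(\<sigma> * sqrt (2 * pi)) ^ card K"
  have neg_meas: "\<And>p. p \<in> K \<Longrightarrow> (\<lambda>\<omega>. - X \<omega> p) \<in> borel_measurable M"
    by measurable
  have "ennreal (?c * (\<integral>\<omega>. (\<Prod>p\<in>K. normal_tail \<sigma> x (X \<omega> p)) \<partial>M))
      = ennreal (?c * (\<integral>\<omega>. (\<Prod>p\<in>K. normal_tail \<sigma> x (- X \<omega> p)) \<partial>M))"
  proof -
    let ?L = "PiM K (\<lambda>_. lborel :: real measure)"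
    have "ennreal (?c * (\<integral>\<omega>. (\<Prod>p\<in>K. normal_tail \<sigma> x (X \<omega> p)) \<partial>M))
        = (\<integral>\<^sup>+ a. ennreal (\<Prod>p\<in>K. indicator {..x} (a p))
            * ennreal (\<integral>\<omega>. (\<Prod>p\<in>K. exp (- ((X \<omega> p - a p) / \<sigma>)\<^sup>2 / 2)) \<partial>M) \<partial>?L)"
      by (rule integral_prod_normal_tail_eq_nn_integral[OF K X_meas \<sigma>])
    also have "\<dots> = (\<integral>\<^sup>+ a. ennreal (\<Prod>p\<in>K. indicator {..x} (a p))
            * ennreal (\<integral>\<omega>. (\<Prod>p\<in>K. exp (- ((- X \<omega> p - a p) / \<sigma>)\<^sup>2 / 2)) \<partial>M) \<partial>?L)"
      by (simp only: integral_gaussian_kernel_neg[OF K X_meas sin_zero])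
    also have "\<dots> = ennreal (?c * (\<integral>\<omega>. (\<Prod>p\<in>K. normal_tail \<sigma> x (- X \<omega> p)) \<partial>M))"
      by (rule integral_prod_normal_tail_eq_nn_integral[OF K neg_meas \<sigma>, symmetric])
    finally show ?thesis .
  qed
  moreover have "0 < ?c"
    using \<sigma> by simp
  ultimately show ?thesis
    using \<sigma> by (simp add: ennreal_inj integral_nonneg prod_nonneg normal_tail_nonneg)
qed

lemma tendsto_std_normal_lessThan_at_bot:
  assumes "filterlim y at_bot F"
  shows "((\<lambda>m. measure std_normal_distribution {..< y m}) \<longlongrightarrow> 0) F"
proof -
  interpret std_normal: real_distribution std_normal_distribution
    by (rule real_dist_normal_dist)
  have lim: "((\<lambda>m. cdf std_normal_distribution (y m)) \<longlongrightarrow> 0) F"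
    using filterlim_compose[OF std_normal.cdf_lim_at_bot assms] .
  have le: "measure std_normal_distribution {..< y m} \<le> cdf std_normal_distribution (y m)" for m
    unfolding cdf_def by (rule std_normal.finite_measure_mono) auto
  show ?thesis
    by (rule tendsto_sandwich[OF always_eventually always_eventually tendsto_const lim]) (simp_all add: le)
qed

lemma tendsto_std_normal_lessThan_at_top:
  assumes "filterlim y at_top F"
  shows "((\<lambda>m. measure std_normal_distribution {..< y m}) \<longlongrightarrow> 1) F"
proof -
  interpret std_normal: real_distribution std_normal_distribution
    by (rule real_dist_normal_dist)
  have "filterlim (\<lambda>m. - 1 + y m) at_top F"
    by (rule filterlim_tendsto_add_at_top[OF tendsto_const assms])
  then have lim: "((\<lambda>m. cdf std_normal_distribution (- 1 + y m)) \<longlongrightarrow> 1) F"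
    using filterlim_compose[OF std_normal.cdf_lim_at_top_prob] by blast
  have le: "cdf std_normal_distribution (- 1 + y m) \<le> measure std_normal_distribution {..< y m}" for m
    unfolding cdf_def by (rule std_normal.finite_measure_mono) auto
  show ?thesis
    by (rule tendsto_sandwich[OF always_eventually always_eventually lim tendsto_const]) (use le in auto)
qed

text \<open>The threshold shift \<open>1 / (m + 1)\<close> dominates the scale \<open>1 / (m + 1)\<^sup>2\<close>, so the limit is
  the indicator also at \<open>u = x\<close> and no atomlessness of the smoothed variables is needed.\<close>
lemma normal_tail_tendsto_indicator:
  "(\<lambda>m. normal_tail (1 / real (Suc m) ^ 2) (x + 1 / real (Suc m)) u) \<longlonglongrightarrow> indicator {..x} u"
proof -
  let ?y = "\<lambda>m. (u - x) * real (Suc m) ^ 2 - real (Suc m)"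
  have tail: "normal_tail (1 / real (Suc m) ^ 2) (x + 1 / real (Suc m)) u
      = 1 - measure std_normal_distribution {..< ?y m}" for m
  proof -
    have "real (Suc m) \<noteq> 0"
      by (simp del: of_nat_Suc)
    then have "(u - (x + 1 / real (Suc m))) / (1 / real (Suc m) ^ 2) = ?y m"
      by (simp add: field_simps power2_eq_square del: of_nat_Suc)
    then show ?thesis
      unfolding normal_tail_eq_1_minus by (rule arg_cong)
  qed
  consider "u < x" | "u = x" | "x < u"
    by linarith
  then show ?thesis
  proof cases
    case 1
    then have "filterlim ?y at_bot sequentially"
      by real_asymp
    from tendsto_diff[OF tendsto_const tendsto_std_normal_lessThan_at_bot[OF this], of 1] 1
    show ?thesis
      unfolding tail by simp
  next
    case 2
    have "filterlim (\<lambda>m. - real (Suc m)) at_bot sequentially"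
      by real_asymp
    with 2 have "filterlim ?y at_bot sequentially"
      by simp
    from tendsto_diff[OF tendsto_const tendsto_std_normal_lessThan_at_bot[OF this], of 1] 2
    show ?thesis
      unfolding tail by simp
  next
    case 3
    then have "filterlim ?y at_top sequentially"
      by real_asymp
    from tendsto_diff[OF tendsto_const tendsto_std_normal_lessThan_at_top[OF this], of 1] 3
    show ?thesis
      unfolding tail by simp
  qed
qed

lemma (in prob_space) tendsto_integral_prod_normal_tail:
  fixes K :: "'p set" and X :: "'a \<Rightarrow> 'p \<Rightarrow> real"
  assumes K: "finite K" and [measurable]: "\<And>p. p \<in> K \<Longrightarrow> (\<lambda>\<omega>. X \<omega> p) \<in> borel_measurable M"
  shows "(\<lambda>m. \<integral>\<omega>. (\<Prod>p\<in>K. normal_tail (1 / real (Suc m) ^ 2) (x + 1 / real (Suc m)) (X \<omega> p)) \<partial>M)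
       \<longlonglongrightarrow> prob {\<omega> \<in> space M. \<forall>p\<in>K. X \<omega> p \<le> x}"
proof -
  let ?A = "{\<omega> \<in> space M. \<forall>p\<in>K. X \<omega> p \<le> x}"
  have A [measurable]: "?A \<in> sets M"
    using K by measurable
  have pointwise: "AE \<omega> in M. (\<lambda>m. \<Prod>p\<in>K. normal_tail (1 / real (Suc m) ^ 2) (x + 1 / real (Suc m)) (X \<omega> p))
      \<longlonglongrightarrow> indicator ?A \<omega>"
  proof (rule AE_I2)
    fix \<omega> assume "\<omega> \<in> space M"
    then have "(\<Prod>p\<in>K. indicator {..x} (X \<omega> p)) = (indicator ?A \<omega> :: real)"
      using K by (auto simp: indicator_def)
    moreover have "(\<lambda>m. \<Prod>p\<in>K. normal_tail (1 / real (Suc m) ^ 2) (x + 1 / real (Suc m)) (X \<omega> p))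
        \<longlonglongrightarrow> (\<Prod>p\<in>K. indicator {..x} (X \<omega> p))"
      by (intro tendsto_prod normal_tail_tendsto_indicator)
    ultimately show "(\<lambda>m. \<Prod>p\<in>K. normal_tail (1 / real (Suc m) ^ 2) (x + 1 / real (Suc m)) (X \<omega> p))
        \<longlonglongrightarrow> indicator ?A \<omega>"
      by simp
  qed
  have "(\<lambda>m. \<integral>\<omega>. (\<Prod>p\<in>K. normal_tail (1 / real (Suc m) ^ 2) (x + 1 / real (Suc m)) (X \<omega> p)) \<partial>M)
       \<longlonglongrightarrow> (\<integral>\<omega>. indicator ?A \<omega> \<partial>M)"
  proof (rule integral_dominated_convergence[where w="\<lambda>_. 1"])
    show "AE \<omega> in M. (\<lambda>m. \<Prod>p\<in>K. normal_tail (1 / real (Suc m) ^ 2) (x + 1 / real (Suc m)) (X \<omega> p))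
        \<longlonglongrightarrow> indicator ?A \<omega>"
      by (fact pointwise)
    show "indicator ?A \<in> borel_measurable M"
      by measurable
    show "(\<lambda>\<omega>. \<Prod>p\<in>K. normal_tail (1 / real (Suc m) ^ 2) (x + 1 / real (Suc m)) (X \<omega> p))
        \<in> borel_measurable M" for m
      by measurable
    show "integrable M (\<lambda>_. 1 :: real)"
      by simp
    show "AE \<omega> in M. norm (\<Prod>p\<in>K. normal_tail (1 / real (Suc m) ^ 2) (x + 1 / real (Suc m)) (X \<omega> p)) \<le> 1"
      for m
      by (simp add: abs_of_nonneg prod_normal_tail_nonneg prod_normal_tail_le_1)
  qed
  then show ?thesis
    by simp
qed

lemma (in prob_space) prob_orthant_neg:
  fixes K :: "'p set" and X :: "'a \<Rightarrow> 'p \<Rightarrow> real"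
  assumes K: "finite K" and X_meas [measurable]: "\<And>p. p \<in> K \<Longrightarrow> (\<lambda>\<omega>. X \<omega> p) \<in> borel_measurable M"
    and sin_zero: "\<And>t. (\<integral>\<omega>. sin (\<Sum>p\<in>K. t p * X \<omega> p) \<partial>M) = 0"
  shows "prob {\<omega> \<in> space M. \<forall>p\<in>K. - X \<omega> p \<le> x} = prob {\<omega> \<in> space M. \<forall>p\<in>K. X \<omega> p \<le> x}"
proof -
  have neg_meas: "\<And>p. p \<in> K \<Longrightarrow> (\<lambda>\<omega>. - X \<omega> p) \<in> borel_measurable M"
    by measurable
  have pos: "0 < 1 / real (Suc m) ^ 2" for m
    by (intro divide_pos_pos zero_less_power) (simp_all only: of_nat_0_less_iff zero_less_Suc zero_less_one)
  have eq: "(\<lambda>m. \<integral>\<omega>. (\<Prod>p\<in>K. normal_tail (1 / real (Suc m) ^ 2) (x + 1 / real (Suc m)) (X \<omega> p)) \<partial>M)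
      = (\<lambda>m. \<integral>\<omega>. (\<Prod>p\<in>K. normal_tail (1 / real (Suc m) ^ 2) (x + 1 / real (Suc m)) (- X \<omega> p)) \<partial>M)"
    by (rule ext, rule integral_prod_normal_tail_neg[OF K _ sin_zero pos]) (rule X_meas)
  have "(\<lambda>m. \<integral>\<omega>. (\<Prod>p\<in>K. normal_tail (1 / real (Suc m) ^ 2) (x + 1 / real (Suc m)) (X \<omega> p)) \<partial>M)
      \<longlonglongrightarrow> prob {\<omega> \<in> space M. \<forall>p\<in>K. X \<omega> p \<le> x}"
    by (rule tendsto_integral_prod_normal_tail[OF K]) (rule X_meas)
  then have "(\<lambda>m. \<integral>\<omega>. (\<Prod>p\<in>K. normal_tail (1 / real (Suc m) ^ 2) (x + 1 / real (Suc m)) (- X \<omega> p)) \<partial>M)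
      \<longlonglongrightarrow> prob {\<omega> \<in> space M. \<forall>p\<in>K. X \<omega> p \<le> x}"
    unfolding eq .
  moreover have "(\<lambda>m. \<integral>\<omega>. (\<Prod>p\<in>K. normal_tail (1 / real (Suc m) ^ 2) (x + 1 / real (Suc m)) (- X \<omega> p)) \<partial>M)
      \<longlonglongrightarrow> prob {\<omega> \<in> space M. \<forall>p\<in>K. - X \<omega> p \<le> x}"
    by (rule tendsto_integral_prod_normal_tail[OF K]) (rule neg_meas)
  ultimately show ?thesis
    by (rule LIMSEQ_unique[symmetric])
qed

lemma integral_normal_density_sin: "(\<integral>x. normal_density 0 s x * sin x \<partial>lborel) = 0"
proof -
  have "(\<integral>x. normal_density 0 s x * sin x \<partial>lborel)
      = \<bar>- 1\<bar> *\<^sub>R (\<integral>x. normal_density 0 s (0 + (- 1) * x) * sin (0 + (- 1) * x) \<partial>lborel)"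
    by (rule lborel_integral_real_affine) simp
  also have "\<dots> = - (\<integral>x. normal_density 0 s x * sin x \<partial>lborel)"
    by (simp add: normal_density_def)
  finally show ?thesis
    by simp
qed

lemma centered_gaussian_vector_integral_sin:
  assumes X: "centered_gaussian_vector N P X C" and P: "finite P" and K: "K \<subseteq> P"
  shows "(\<integral>\<omega>. sin (\<Sum>p\<in>K. t p * X \<omega> p) \<partial>N) = 0"
proof -
  interpret prob_space N
    using X by (simp add: centered_gaussian_vector_def)
  have [measurable]: "\<And>p. p \<in> K \<Longrightarrow> (\<lambda>\<omega>. X \<omega> p) \<in> borel_measurable N"
    using X K by (auto simp: centered_gaussian_vector_def)
  define c where "c p = (if p \<in> K then t p else 0)" for p
  define s2 where "s2 = (\<Sum>p\<in>P. \<Sum>q\<in>P. c p * c q * C p q)"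
  have sum_c: "(\<Sum>p\<in>P. c p * X \<omega> p) = (\<Sum>p\<in>K. t p * X \<omega> p)" for \<omega>
    using P K by (intro sum.mono_neutral_cong_right) (auto simp: c_def)
  have distr: "distr N borel (\<lambda>\<omega>. \<Sum>p\<in>P. c p * X \<omega> p)
      = (if s2 = 0 then return borel 0 else density lborel (normal_density 0 (sqrt s2)))"
    using X unfolding centered_gaussian_vector_def Let_def s2_def by blast
  have "(\<integral>\<omega>. sin (\<Sum>p\<in>K. t p * X \<omega> p) \<partial>N)
      = (\<integral>y. sin y \<partial>distr N borel (\<lambda>\<omega>. \<Sum>p\<in>P. c p * X \<omega> p))"
    by (subst integral_distr) (auto simp: sum_c)
  also have "\<dots> = 0"
    by (simp add: distr integral_return integral_density integral_normal_density_sin)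
  finally show ?thesis .
qed

lemma centered_gaussian_vector_prob_orthant_neg:
  assumes X: "centered_gaussian_vector N P X C" and P: "finite P" and K: "K \<subseteq> P"
  shows "measure N {\<omega> \<in> space N. \<forall>p\<in>K. - X \<omega> p \<le> x} = measure N {\<omega> \<in> space N. \<forall>p\<in>K. X \<omega> p \<le> x}"
proof -
  interpret prob_space N
    using X by (simp add: centered_gaussian_vector_def)
  show ?thesis
  proof (rule prob_orthant_neg)
    show "finite K"
      using P K by (rule rev_finite_subset)
    show "\<And>p. p \<in> K \<Longrightarrow> (\<lambda>\<omega>. X \<omega> p) \<in> borel_measurable N"
      using X K by (auto simp: centered_gaussian_vector_def)
    show "\<And>t. (\<integral>\<omega>. sin (\<Sum>p\<in>K. t p * X \<omega> p) \<partial>N) = 0"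
      by (rule centered_gaussian_vector_integral_sin[OF X P K])
  qed
qed

section \<open>Quantiles\<close>

lemma (in real_distribution) bdd_below_cdf_ge:
  assumes "0 < \<tau>"
  shows "bdd_below {x. \<tau> \<le> cdf M x}"
proof -
  have "eventually (\<lambda>x. cdf M x < \<tau>) at_bot"
    using order_tendstoD(2)[OF cdf_lim_at_bot assms] .
  then obtain b where "\<And>x. x \<le> b \<Longrightarrow> cdf M x < \<tau>"
    by (auto simp: eventually_at_bot_linorder)
  then show ?thesis
    by (intro bdd_belowI[where m=b]) (metis linorder_not_le mem_Collect_eq order.strict_implies_order)
qed

lemma (in real_distribution) cdf_Inf_ge:
  assumes \<tau>: "0 < \<tau>" "\<tau> < 1"
  shows "\<tau> \<le> cdf M (Inf {x. \<tau> \<le> cdf M x})"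
proof -
  let ?S = "{x. \<tau> \<le> cdf M x}"
  have "eventually (\<lambda>x. \<tau> < cdf M x) at_top"
    using order_tendstoD(1)[OF cdf_lim_at_top_prob \<tau>(2)] .
  then have nonempty: "?S \<noteq> {}"
    by (auto simp: eventually_at_top_linorder dest: less_imp_le)
  have "eventually (\<lambda>y. \<tau> \<le> cdf M y) (at_right (Inf ?S))"
    using eventually_at_right_less
  proof (rule eventually_mono)
    fix y assume "Inf ?S < y"
    then obtain s where "\<tau> \<le> cdf M s" "s < y"
      using cInf_less_iff[OF nonempty bdd_below_cdf_ge[OF \<tau>(1)]] by auto
    then show "\<tau> \<le> cdf M y"
      using cdf_nondecreasing[of s y] by linarith
  qed
  moreover have "(cdf M \<longlongrightarrow> cdf M (Inf ?S)) (at_right (Inf ?S))"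
    using cdf_is_right_cont[of "Inf ?S"] by (simp add: continuous_within)
  ultimately show ?thesis
    using tendsto_lowerbound by (metis trivial_limit_at_right_real)
qed

lemma (in prob_space) prob_le_eq_cdf:
  assumes "Y \<in> borel_measurable M"
  shows "prob {\<omega> \<in> space M. Y \<omega> \<le> x} = cdf (distr M borel Y) x"
proof -
  have "Y -` {..x} \<inter> space M = {\<omega> \<in> space M. Y \<omega> \<le> x}"
    by auto
  then show ?thesis
    using assms by (simp add: cdf_def measure_distr)
qed

lemma (in prob_space) prob_le_quantile:
  assumes Y: "Y \<in> borel_measurable M" and \<tau>: "0 < \<tau>" "\<tau> < 1"
  shows "\<tau> \<le> prob {\<omega> \<in> space M. Y \<omega> \<le> quantile M Y \<tau>}"
proof -
  interpret D: real_distribution "distr M borel Y"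
    using Y by (rule real_distribution_distr)
  show ?thesis
    using D.cdf_Inf_ge[OF \<tau>] by (simp add: quantile_def prob_le_eq_cdf[OF Y])
qed

lemma (in prob_space) quantile_le:
  assumes Y: "Y \<in> borel_measurable M" and \<tau>: "0 < \<tau>" and x: "\<tau> \<le> prob {\<omega> \<in> space M. Y \<omega> \<le> x}"
  shows "quantile M Y \<tau> \<le> x"
proof -
  interpret D: real_distribution "distr M borel Y"
    using Y by (rule real_distribution_distr)
  show ?thesis
    using x D.bdd_below_cdf_ge[OF \<tau>]
    by (auto simp: quantile_def prob_le_eq_cdf[OF Y] intro: cInf_lower)
qed

lemma quantile_between_if_cdf_close:
  fixes Y :: "'a \<Rightarrow> real" and W :: "'b \<Rightarrow> real"
  assumes N: "prob_space N" and W: "W \<in> borel_measurable N"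
    and close: "\<And>x. \<bar>measure M {\<omega> \<in> space M. Y \<omega> \<le> x} - measure N {\<omega> \<in> space N. W \<omega> \<le> x}\<bar> \<le> r"
    and \<tau>: "0 < \<tau> - r" "\<tau> + r < 1"
  shows "quantile N W (\<tau> - r) \<le> quantile M Y \<tau> \<and> quantile M Y \<tau> \<le> quantile N W (\<tau> + r)"
proof -
  interpret N: prob_space N
    by (rule N)
  let ?S = "{x. \<tau> \<le> measure M {\<omega> \<in> space M. Y \<omega> \<le> x}}"
  have "0 \<le> r"
    using close[of 0] by linarith
  then have "\<tau> \<le> measure M {\<omega> \<in> space M. Y \<omega> \<le> quantile N W (\<tau> + r)}"
    using N.prob_le_quantile[OF W, of "\<tau> + r"] close[of "quantile N W (\<tau> + r)"] \<tau>
    by (auto simp: abs_le_iff)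
  then have upper: "quantile N W (\<tau> + r) \<in> ?S"
    by simp
  have lower: "quantile N W (\<tau> - r) \<le> x" if "x \<in> ?S" for x
    using that close[of x] \<tau> by (intro N.quantile_le[OF W]) (auto simp: abs_le_iff)
  have "quantile M Y \<tau> = Inf ?S"
    by (simp add: quantile_def)
  then show ?thesis
    using upper lower by (auto intro!: cInf_greatest cInf_lower bdd_belowI)
qed

section \<open>Coverage and regret of the PoLeCe policy\<close>

lemma (in prob_space) prob_Int_ge:
  assumes "A \<in> events" "B \<in> events"
  shows "prob A + prob B - 1 \<le> prob (A \<inter> B)"
proof -
  have "prob (A \<union> B) = prob A + prob B - prob (A \<inter> B)"
    using assms by (intro measure_Un3) (auto simp: fmeasurable_def emeasure_eq_measure)
  then show ?thesis
    using prob_le_1[of "A \<union> B"] by linarith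
qed

locale polece =
  fixes M :: "'a measure" and Pi :: "'p set" and V :: "'p \<Rightarrow> real"
    and Vhat shat :: "'a \<Rightarrow> 'p \<Rightarrow> real"
    and N :: "'b measure" and Z :: "'b \<Rightarrow> 'p \<Rightarrow> real" and CZ :: "'p \<Rightarrow> 'p \<Rightarrow> real"
    and Pst :: "'a \<Rightarrow> 'c measure" and Zst :: "'a \<Rightarrow> 'c \<Rightarrow> 'p \<Rightarrow> real"
    and r \<delta> \<alpha> \<beta> :: real and pihat :: "'a \<Rightarrow> 'p" and EB :: "'a set"
  assumes M: "prob_space M"
    and Pi: "finite Pi" "Pi \<noteq> {}"
    and Vhat_meas: "\<And>p. p \<in> Pi \<Longrightarrow> (\<lambda>\<omega>. Vhat \<omega> p) \<in> borel_measurable M"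
    and shat_meas: "\<And>p. p \<in> Pi \<Longrightarrow> (\<lambda>\<omega>. shat \<omega> p) \<in> borel_measurable M"
    and shat_pos: "\<And>\<omega> p. \<omega> \<in> space M \<Longrightarrow> p \<in> Pi \<Longrightarrow> 0 < shat \<omega> p"
    and Z: "centered_gaussian_vector N Pi Z CZ"
    and r: "0 \<le> r"
    and G: "\<And>I. rectangle_family Pi I \<Longrightarrow>
              \<bar>prob_rect M Pi (\<lambda>\<omega> p. (Vhat \<omega> p - V p) / shat \<omega> p) I - prob_rect N Pi Z I\<bar> \<le> r"
    and EB: "EB \<in> sets M" "1 - \<delta> \<le> measure M EB"
    and EB_close: "\<And>\<omega> I. \<omega> \<in> EB \<Longrightarrow> rectangle_family Pi I \<Longrightarrow>
              \<bar>prob_rect (Pst \<omega>) Pi (Zst \<omega>) I - prob_rect N Pi Z I\<bar> \<le> r"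
    and \<alpha>: "r < \<alpha>" "\<alpha> + 2 * r < 1"
    and \<beta>: "0 < \<beta>" "\<beta> < 1"
    and pihat: "\<And>\<omega>. \<omega> \<in> space M \<Longrightarrow> pihat \<omega> \<in> Pi"
    and pihat_max: "\<And>\<omega>. \<omega> \<in> space M \<Longrightarrow>
        (let qhat = quantile (Pst \<omega>) (\<lambda>y. Max ((Zst \<omega> y) ` Pi)) (1 - \<alpha>);
             LV = (\<lambda>p. Vhat \<omega> p - qhat * shat \<omega> p)
         in LV (pihat \<omega>) = Max (LV ` Pi))"
begin

definition "Vmax = Max (V ` Pi)"
definition "Pi0 = {p \<in> Pi. V p = Vmax}"
definition "qhat \<omega> = quantile (Pst \<omega>) (\<lambda>y. Max ((Zst \<omega> y) ` Pi)) (1 - \<alpha>)"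
definition "LV \<omega> p = Vhat \<omega> p - qhat \<omega> * shat \<omega> p"
definition "LVmax \<omega> = Max (LV \<omega> ` Pi)"
definition "Zhat \<omega> p = (Vhat \<omega> p - V p) / shat \<omega> p"
definition "qZ \<tau> K = quantile N (\<lambda>y. Max ((Z y) ` K)) \<tau>"

sublocale M: prob_space M
  by (rule M)

sublocale N: prob_space N
  using Z by (simp add: centered_gaussian_vector_def)

lemma Pi0: "finite Pi0" "Pi0 \<noteq> {}" "Pi0 \<subseteq> Pi"
proof -
  show "Pi0 \<subseteq> Pi"
    by (auto simp: Pi0_def)
  then show "finite Pi0"
    using Pi(1) by (rule finite_subset)
  have "Vmax \<in> V ` Pi"
    unfolding Vmax_def using Pi by (intro Max_in) auto
  then show "Pi0 \<noteq> {}"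
    by (auto simp: Pi0_def)
qed

lemma Z_measurable [measurable]: "p \<in> Pi \<Longrightarrow> (\<lambda>y. Z y p) \<in> borel_measurable N"
  using Z by (simp add: centered_gaussian_vector_def)

lemma Zhat_measurable [measurable]:
  assumes "p \<in> Pi"
  shows "(\<lambda>\<omega>. Zhat \<omega> p) \<in> borel_measurable M"
proof -
  note [measurable] = Vhat_meas[OF assms] shat_meas[OF assms]
  show ?thesis
    unfolding Zhat_def by measurable
qed

lemma prob_Z_le_qZ:
  assumes "K \<subseteq> Pi" "K \<noteq> {}" "0 < \<tau>" "\<tau> < 1"
  shows "\<tau> \<le> N.prob {y \<in> space N. \<forall>p\<in>K. Z y p \<le> qZ \<tau> K}"
proof -
  have "finite K"
    using assms(1) Pi(1) by (rule finite_subset)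
  then have "(\<lambda>y. Max (Z y ` K)) \<in> borel_measurable N"
    using assms(1) by (intro borel_measurable_Max) auto
  then show ?thesis
    using N.prob_le_quantile[of "\<lambda>y. Max (Z y ` K)" \<tau>] assms \<open>finite K\<close>
    by (simp add: qZ_def)
qed

lemma qhat_bounds:
  assumes "\<omega> \<in> EB"
  shows "qZ (1 - \<alpha> - r) Pi \<le> qhat \<omega> \<and> qhat \<omega> \<le> qZ (1 - \<alpha> + r) Pi"
  unfolding qhat_def qZ_def
proof (rule quantile_between_if_cdf_close[OF N.prob_space_axioms])
  show "(\<lambda>y. Max (Z y ` Pi)) \<in> borel_measurable N"
    using Pi by (intro borel_measurable_Max) auto
  show "\<bar>measure (Pst \<omega>) {y \<in> space (Pst \<omega>). Max (Zst \<omega> y ` Pi) \<le> x}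
      - measure N {y \<in> space N. Max (Z y ` Pi) \<le> x}\<bar> \<le> r" for x
    using EB_close[OF assms, of "\<lambda>_. {..x}"] Pi
    by (simp add: rectangle_family_def prob_rect_def)
  show "0 < 1 - \<alpha> - r" "1 - \<alpha> + r < 1"
    using \<alpha> r by linarith+
qed

lemma Zhat_rectangle:
  assumes "rectangle_family Pi I" "\<And>p. I p \<in> sets borel"
  shows "{\<omega> \<in> space M. \<forall>p\<in>Pi. Zhat \<omega> p \<in> I p} \<in> sets M"
    and "prob_rect N Pi Z I - r \<le> measure M {\<omega> \<in> space M. \<forall>p\<in>Pi. Zhat \<omega> p \<in> I p}"
proof -
  show "{\<omega> \<in> space M. \<forall>p\<in>Pi. Zhat \<omega> p \<in> I p} \<in> sets M"
    using Pi(1) assms(2) by measurable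
  show "prob_rect N Pi Z I - r \<le> measure M {\<omega> \<in> space M. \<forall>p\<in>Pi. Zhat \<omega> p \<in> I p}"
    using G[OF assms(1)] by (simp add: prob_rect_def Zhat_def abs_le_iff)
qed

lemma LVmax_le_V_pihat:
  assumes \<omega>: "\<omega> \<in> space M" and covered: "\<forall>p\<in>Pi. Zhat \<omega> p \<le> qhat \<omega>"
  shows "LVmax \<omega> \<le> V (pihat \<omega>)"
proof -
  have "LVmax \<omega> = LV \<omega> (pihat \<omega>)"
    using pihat_max[OF \<omega>] by (simp add: LVmax_def LV_def qhat_def Let_def)
  also have "\<dots> \<le> V (pihat \<omega>)"
    using covered pihat[OF \<omega>] shat_pos[OF \<omega> pihat[OF \<omega>]]
    by (auto simp: LV_def Zhat_def pos_divide_le_eq algebra_simps)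
  finally show ?thesis .
qed

lemma Vmax_minus_LVmax_le:
  assumes \<omega>: "\<omega> \<in> space M" and p0: "p0 \<in> Pi0" and Zhat_p0: "- q \<le> Zhat \<omega> p0"
  shows "Vmax - LVmax \<omega> \<le> shat \<omega> p0 * (q + qhat \<omega>)"
proof -
  have p0_Pi: "p0 \<in> Pi" and "V p0 = Vmax"
    using p0 by (auto simp: Pi0_def)
  have "LV \<omega> p0 \<le> LVmax \<omega>"
    using Pi(1) p0_Pi by (simp add: LVmax_def)
  moreover have "Vmax - LV \<omega> p0 = shat \<omega> p0 * (qhat \<omega> - Zhat \<omega> p0)"
    using shat_pos[OF \<omega> p0_Pi] \<open>V p0 = Vmax\<close> by (simp add: LV_def Zhat_def field_simps)
  moreover have "shat \<omega> p0 * (qhat \<omega> - Zhat \<omega> p0) \<le> shat \<omega> p0 * (q + qhat \<omega>)"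
    using shat_pos[OF \<omega> p0_Pi] Zhat_p0 by (intro mult_left_mono) auto
  ultimately show ?thesis
    by linarith
qed

theorem coverage:
  "\<exists>E \<in> sets M. 1 - \<alpha> - (2 * r + \<delta>) \<le> measure M E \<and>
     (\<forall>\<omega>\<in>E. V (pihat \<omega>) \<le> Vmax \<and> LVmax \<omega> \<le> V (pihat \<omega>))"
proof -
  let ?c = "qZ (1 - \<alpha> - r) Pi"
  let ?A = "{\<omega> \<in> space M. \<forall>p\<in>Pi. Zhat \<omega> p \<in> {..?c}}"
  have A: "?A \<in> sets M" "1 - \<alpha> - r - r \<le> measure M ?A"
    using Zhat_rectangle[of "\<lambda>_. {..?c}"] prob_Z_le_qZ[OF subset_refl Pi(2), of "1 - \<alpha> - r"] \<alpha> r
    by (auto simp: rectangle_family_def prob_rect_def)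
  show ?thesis
  proof (intro bexI conjI ballI)
    show "EB \<inter> ?A \<in> sets M"
      using EB(1) A(1) by simp
    show "1 - \<alpha> - (2 * r + \<delta>) \<le> measure M (EB \<inter> ?A)"
      using M.prob_Int_ge[OF EB(1) A(1)] EB(2) A(2) by linarith
    fix \<omega> assume \<omega>: "\<omega> \<in> EB \<inter> ?A"
    then show "V (pihat \<omega>) \<le> Vmax"
      using Pi(1) pihat by (simp add: Vmax_def)
    show "LVmax \<omega> \<le> V (pihat \<omega>)"
      using \<omega> qhat_bounds[of \<omega>] by (intro LVmax_le_V_pihat) force+
  qed
qed

definition "regret_rectangle p =
  (if p \<in> Pi0 then {- qZ (1 - \<beta>) Pi0 .. qZ (1 - \<alpha> - r) Pi} else {.. qZ (1 - \<alpha> - r) Pi})"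

lemma regret_rectangle_borel: "regret_rectangle p \<in> sets borel"
  by (simp add: regret_rectangle_def)

lemma rectangle_family_regret_rectangle: "rectangle_family Pi regret_rectangle"
  by (simp add: rectangle_family_def regret_rectangle_def)

lemma prob_regret_rectangle: "1 - \<alpha> - r - \<beta> \<le> prob_rect N Pi Z regret_rectangle"
proof -
  let ?c = "qZ (1 - \<alpha> - r) Pi" and ?q = "qZ (1 - \<beta>) Pi0"
  let ?below = "{y \<in> space N. \<forall>p\<in>Pi. Z y p \<le> ?c}"
  let ?above = "{y \<in> space N. \<forall>p\<in>Pi0. - Z y p \<le> ?q}"
  have [measurable]: "\<And>p. p \<in> Pi0 \<Longrightarrow> (\<lambda>y. Z y p) \<in> borel_measurable N"
    using Pi0(3) by auto
  have events: "?below \<in> N.events" "?above \<in> N.events"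
    using Pi(1) Pi0(1) by measurable
  have "1 - \<beta> \<le> N.prob ?above"
    \<comment> \<open>the lower one-sided bound uses the symmetry of the centred Gaussian vector\<close>
    using prob_Z_le_qZ[OF Pi0(3) Pi0(2), of "1 - \<beta>"] \<beta>
      centered_gaussian_vector_prob_orthant_neg[OF Z Pi(1) Pi0(3)] by simp
  moreover have "1 - \<alpha> - r \<le> N.prob ?below"
    using prob_Z_le_qZ[OF subset_refl Pi(2), of "1 - \<alpha> - r"] \<alpha> r by simp
  moreover have "N.prob (?below \<inter> ?above) \<le> prob_rect N Pi Z regret_rectangle"
    unfolding prob_rect_def
  proof (rule N.finite_measure_mono)
    show "?below \<inter> ?above \<subseteq> {y \<in> space N. \<forall>p\<in>Pi. Z y p \<in> regret_rectangle p}"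
      by (auto simp: regret_rectangle_def)
    show "{y \<in> space N. \<forall>p\<in>Pi. Z y p \<in> regret_rectangle p} \<in> N.events"
      using Pi(1) regret_rectangle_borel by measurable
  qed
  ultimately show ?thesis
    using N.prob_Int_ge[OF events] by linarith
qed

lemma regret_le:
  assumes \<omega>: "\<omega> \<in> EB" "\<omega> \<in> space M" and in_rectangle: "\<forall>p\<in>Pi. Zhat \<omega> p \<in> regret_rectangle p"
  shows "Vmax - V (pihat \<omega>) \<le> Vmax - LVmax \<omega>"
    and "Vmax - LVmax \<omega> \<le> Min (shat \<omega> ` Pi0) * (qZ (1 - \<beta>) Pi0 + qZ (1 - \<alpha> + r) Pi)"
proof -
  let ?c = "qZ (1 - \<alpha> - r) Pi" and ?q = "qZ (1 - \<beta>) Pi0"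
  have qhat: "?c \<le> qhat \<omega>" "qhat \<omega> \<le> qZ (1 - \<alpha> + r) Pi"
    using qhat_bounds[OF \<omega>(1)] by auto
  have "Zhat \<omega> p \<le> ?c" if "p \<in> Pi" for p
    using in_rectangle that by (auto simp: regret_rectangle_def split: if_splits)
  then have "\<forall>p\<in>Pi. Zhat \<omega> p \<le> qhat \<omega>"
    using qhat(1) by (blast intro: order_trans)
  then show "Vmax - V (pihat \<omega>) \<le> Vmax - LVmax \<omega>"
    using LVmax_le_V_pihat[OF \<omega>(2)] by simp
  have "Min (shat \<omega> ` Pi0) \<in> shat \<omega> ` Pi0"
    using Pi0 by (intro Min_in) auto
  then obtain p0 where p0: "p0 \<in> Pi0" "Min (shat \<omega> ` Pi0) = shat \<omega> p0"
    by auto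
  moreover have "Zhat \<omega> p0 \<in> regret_rectangle p0"
    using in_rectangle p0(1) Pi0(3) by blast
  ultimately have "- ?q \<le> Zhat \<omega> p0"
    by (simp add: regret_rectangle_def)
  then have "Vmax - LVmax \<omega> \<le> shat \<omega> p0 * (?q + qhat \<omega>)"
    by (rule Vmax_minus_LVmax_le[OF \<omega>(2) p0(1)])
  also have "\<dots> \<le> shat \<omega> p0 * (?q + qZ (1 - \<alpha> + r) Pi)"
    using shat_pos[OF \<omega>(2), of p0] p0(1) Pi0(3) qhat(2) by (intro mult_left_mono) auto
  finally show "Vmax - LVmax \<omega> \<le> Min (shat \<omega> ` Pi0) * (?q + qZ (1 - \<alpha> + r) Pi)"
    by (simp add: p0(2))
qed

theorem regret_bound:
  "\<exists>E \<in> sets M. 1 - \<alpha> - \<beta> - r - (2 * r + \<delta>) \<le> measure M E \<and>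
     (\<forall>\<omega>\<in>E. Vmax - V (pihat \<omega>) \<le> Vmax - LVmax \<omega> \<and>
        Vmax - LVmax \<omega> \<le> Min (shat \<omega> ` Pi0) * (qZ (1 - \<beta>) Pi0 + qZ (1 - \<alpha> + r) Pi))"
proof -
  let ?A = "{\<omega> \<in> space M. \<forall>p\<in>Pi. Zhat \<omega> p \<in> regret_rectangle p}"
  note A = Zhat_rectangle[OF rectangle_family_regret_rectangle regret_rectangle_borel]
  show ?thesis
  proof (intro bexI conjI ballI)
    show "EB \<inter> ?A \<in> sets M"
      using EB(1) A(1) by simp
    show "1 - \<alpha> - \<beta> - r - (2 * r + \<delta>) \<le> measure M (EB \<inter> ?A)"
      using M.prob_Int_ge[OF EB(1) A(1)] EB(2) A(2) prob_regret_rectangle r by linarith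
  qed (use regret_le in auto)
qed

end

theorem proposition3:
  fixes M :: "'a measure"
    and Pi :: "'p set"
    and n :: nat
    and V :: "'p \<Rightarrow> real"
    and Vhat shat :: "'a \<Rightarrow> 'p \<Rightarrow> real"
    and N :: "'b measure" and Z :: "'b \<Rightarrow> 'p \<Rightarrow> real" and CZ :: "'p \<Rightarrow> 'p \<Rightarrow> real"
    and Chat :: "'a \<Rightarrow> 'p \<Rightarrow> 'p \<Rightarrow> real"
    and Pst :: "'a \<Rightarrow> 'c measure" and Zst :: "'a \<Rightarrow> 'c \<Rightarrow> 'p \<Rightarrow> real"
    and r \<delta> \<alpha> \<beta> :: real
    and pihat :: "'a \<Rightarrow> 'p"
  assumes M: "prob_space M"
    and Pi: "finite Pi" "Pi \<noteq> {}"
    and n: "0 < n"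
    and Vhat_meas: "\<And>p. p \<in> Pi \<Longrightarrow> (\<lambda>\<omega>. Vhat \<omega> p) \<in> borel_measurable M"
    and shat_meas: "\<And>p. p \<in> Pi \<Longrightarrow> (\<lambda>\<omega>. shat \<omega> p) \<in> borel_measurable M"
    and shat_pos: "\<And>\<omega> p. \<omega> \<in> space M \<Longrightarrow> p \<in> Pi \<Longrightarrow> 0 < shat \<omega> p"
    and Z: "centered_gaussian_vector N Pi Z CZ" "\<And>p. p \<in> Pi \<Longrightarrow> CZ p p = 1"
    and r: "0 \<le> r"
    and G: "\<And>I. rectangle_family Pi I \<Longrightarrow>
              \<bar>prob_rect M Pi (\<lambda>\<omega> p. (Vhat \<omega> p - V p) / shat \<omega> p) I - prob_rect N Pi Z I\<bar> \<le> r"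
    and boot: "\<And>\<omega>. \<omega> \<in> space M \<Longrightarrow> centered_gaussian_vector (Pst \<omega>) Pi (Zst \<omega>) (Chat \<omega>)"
    and \<delta>: "0 \<le> \<delta>" "\<delta> \<le> 1"
    and B: "\<exists>E \<in> sets M. measure M E \<ge> 1 - \<delta> \<and>
              (\<forall>\<omega>\<in>E. \<forall>I. rectangle_family Pi I \<longrightarrow>
                 \<bar>prob_rect (Pst \<omega>) Pi (Zst \<omega>) I - prob_rect N Pi Z I\<bar> \<le> r)"
    and \<alpha>: "0 < \<alpha>" "\<alpha> < 1" "r < \<alpha>" "\<alpha> + 2 * r < 1"
    and \<beta>: "0 < \<beta>" "\<beta> < 1"
    and pihat: "\<And>\<omega>. \<omega> \<in> space M \<Longrightarrow> pihat \<omega> \<in> Pi"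
    and pihat_max: "\<And>\<omega>. \<omega> \<in> space M \<Longrightarrow>
        (let qhat = quantile (Pst \<omega>) (\<lambda>y. Max ((Zst \<omega> y) ` Pi)) (1 - \<alpha>);
             LV = (\<lambda>p. Vhat \<omega> p - qhat * shat \<omega> p)
         in LV (pihat \<omega>) = Max (LV ` Pi))"
  shows
    "let Vmax = Max (V ` Pi);
         Pi0 = {p \<in> Pi. V p = Vmax};
         r' = 2 * r + \<delta>;
         qhat = (\<lambda>\<omega>. quantile (Pst \<omega>) (\<lambda>y. Max ((Zst \<omega> y) ` Pi)) (1 - \<alpha>));
         LV = (\<lambda>\<omega> p. Vhat \<omega> p - qhat \<omega> * shat \<omega> p);
         LVmax = (\<lambda>\<omega>. Max (LV \<omega> ` Pi));
         sigma0 = (\<lambda>\<omega>. sqrt (real n) * Min ((shat \<omega>) ` Pi0));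
         q = (\<lambda>\<tau> K. quantile N (\<lambda>x. Max ((Z x) ` K)) \<tau>)
     in (\<exists>E \<in> sets M. measure M E \<ge> 1 - \<alpha> - r' \<and>
           (\<forall>\<omega>\<in>E. Vmax \<ge> V (pihat \<omega>) \<and> V (pihat \<omega>) \<ge> LVmax \<omega>))
      \<and> (\<exists>E \<in> sets M. measure M E \<ge> 1 - \<alpha> - \<beta> - r - r' \<and>
           (\<forall>\<omega>\<in>E. Vmax - V (pihat \<omega>) \<le> Vmax - LVmax \<omega> \<and>
                   Vmax - LVmax \<omega> \<le> sigma0 \<omega> / sqrt (real n) * (q (1 - \<beta>) Pi0 + q (1 - \<alpha> + r) Pi)))"
proof -
  obtain EB where EB: "EB \<in> sets M" "1 - \<delta> \<le> measure M EB"
    and EB_close: "\<And>\<omega> I. \<omega> \<in> EB \<Longrightarrow> rectangle_family Pi I \<Longrightarrow>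
      \<bar>prob_rect (Pst \<omega>) Pi (Zst \<omega>) I - prob_rect N Pi Z I\<bar> \<le> r"
    using B by blast
  interpret polece M Pi V Vhat shat N Z CZ Pst Zst r \<delta> \<alpha> \<beta> pihat EB
    by (intro polece.intro) (fact M Pi Vhat_meas shat_meas shat_pos Z(1) r G EB EB_close \<alpha>(3,4) \<beta>
        pihat pihat_max)+
  have "sqrt (real n) * s / sqrt (real n) = s" for s
    using n by simp
  then show ?thesis
    using coverage regret_bound
    unfolding Let_def Vmax_def Pi0_def LVmax_def LV_def qhat_def qZ_def
    by simp
qed

end
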